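(* Let $\epsilon$ be a constant with $0<\epsilon<1/3$. The $(1+1)$~IA$^{hyp}$ finds an optimal solution of the instance $P^*_\epsilon$ (with $n$ even) in $O(n^2)$ expected fitness function evaluations.
   Context: Partition problem: a solution $x\in\{0,1\}^n$ assigns job $i$ to machine $M_1$ if $x_i=0$ and to $M_2$ if $x_i=1$; the makespan $f(x)=\max\{\sum_i p_ix_i,\sum_i p_i(1-x_i)\}$ is minimised. The instance $P^*_\epsilon$ has $n$ jobs with $p_1=p_2=\frac13-\frac{\epsilon}{4}$ and $p_i=\frac{1/3+\epsilon/2}{n-2}$ for $3\le i\le n$. The $(1+1)$~IA$^{hyp}$ (minimisation): initialise $x$ uniformly at random and evaluate it. Each iteration: $y:=x$, $F:=\{1,\dots,n\}$; while $F\ne\emptyset$ and $f(y)\ge f(x)$: pick $i\in F$ uniformly at random, remove it from $F$, flip $y_i$, evaluate $f(y)$; then if $f(y)\le f(x)$ set $x:=y$. Asymptotics are as $n\to\infty$. *)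

theory Defs
  imports "HOL-Probability.Probability"
begin

text \<open>Solutions are bit strings of length n, represented as bool lists;
  job i (0-based) goes to machine M2 iff xs!i = True.\<close>

definition makespan :: "(nat \<Rightarrow> real) \<Rightarrow> bool list \<Rightarrow> real" where
  "makespan p xs = max (\<Sum>i<length xs. if xs ! i then p i else 0)
                       (\<Sum>i<length xs. if xs ! i then 0 else p i)"

text \<open>The instance P*_eps with n jobs (jobs 1,2 of the paper are indices 0,1 here).\<close>
definition P_star :: "real \<Rightarrow> nat \<Rightarrow> nat \<Rightarrow> real" where
  "P_star eps n i = (if i < 2 then 1/3 - eps/4 else (1/3 + eps/2) / (real n - 2))"

definition flip :: "bool list \<Rightarrow> nat \<Rightarrow> bool list" where
  "flip xs i = xs[i := \<not> xs ! i]"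

definition is_optimal :: "(bool list \<Rightarrow> real) \<Rightarrow> nat \<Rightarrow> bool list \<Rightarrow> bool" where
  "is_optimal f n xs \<longleftrightarrow> length xs = n \<and> (\<forall>ys. length ys = n \<longrightarrow> f xs \<le> f ys)"

text \<open>Hypermutation with stop at first constructive mutation (minimisation):
  returns the final y and the number of fitness evaluations performed.\<close>
function hyp_loop :: "(bool list \<Rightarrow> real) \<Rightarrow> bool list \<Rightarrow> bool list \<Rightarrow> nat set
                       \<Rightarrow> (bool list \<times> nat) pmf" where
  "hyp_loop f x y F =
     (if F = {} \<or> infinite F \<or> f y < f x then return_pmf (y, 0)
      else pmf_of_set F \<bind> (\<lambda>i. map_pmf (\<lambda>(z, c). (z, Suc c)) (hyp_loop f x (flip y i) (F - {i}))))"
  by auto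
termination
  by (relation "Wellfounded.measure (\<lambda>(f, x, y, F). card F)")
     (auto simp: set_pmf_of_set card_gt_0_iff)

definition ia_step :: "(bool list \<Rightarrow> real) \<Rightarrow> nat \<Rightarrow> bool list \<Rightarrow> (bool list \<times> nat) pmf" where
  "ia_step f n x = map_pmf (\<lambda>(y, c). (if f y \<le> f x then y else x, c)) (hyp_loop f x x {..<n})"

primrec ia_cost :: "(bool list \<Rightarrow> real) \<Rightarrow> nat \<Rightarrow> nat \<Rightarrow> bool list \<Rightarrow> ennreal" where
  "ia_cost f n 0 x = 0"
| "ia_cost f n (Suc t) x =
     (if is_optimal f n x then 0
      else \<integral>\<^sup>+ yc. (ennreal (real (snd yc)) + ia_cost f n t (fst yc)) \<partial>measure_pmf (ia_step f n x))"

text \<open>Expected number of fitness evaluations until an optimum is found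
  (1 for evaluating the uniformly random initial solution).\<close>
definition ia_runtime :: "(bool list \<Rightarrow> real) \<Rightarrow> nat \<Rightarrow> ennreal" where
  "ia_runtime f n = \<integral>\<^sup>+ x. (1 + (SUP t. ia_cost f n t x))
                       \<partial>measure_pmf (pmf_of_set {xs :: bool list. length xs = n})"

end

theory Submission
  imports Defs
begin

(* The hypermutation operator flips the positions of a uniformly random permutation of
   {..<n} and stops at the first strict improvement. As long as it has not stopped, the set
   of the first r flipped positions is a uniform r-subset, so an iteration improves with
   probability at least the fraction of improving r-subsets. On P*_eps with n = 2h + 2 every
   non-optimal solution admits such an r with fraction at least 1/2: r = 1 if the two large
   jobs are on different machines (move one small job off the fuller machine), r = h + 1 if
   they are on the same machine (move one large job and h small jobs). An iteration costs at
   most n evaluations and the makespan takes at most 3 (n - 1) values, so a potential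
   argument over the rank of the current makespan among these values bounds the expected
   number of evaluations by 1 + 2 n * 3 (n - 1) <= 6 n^2. *)

declare hyp_loop.simps[simp del]

section \<open>Hypermutation with stop at the first improvement\<close>

lemma measure_bind_pmf_of_set:
  assumes "finite F" "F \<noteq> {}"
  shows "measure_pmf.prob (bind_pmf (pmf_of_set F) g) A
           = (\<Sum>i\<in>F. measure_pmf.prob (g i) A) / card F"
proof -
  have "ennreal (measure_pmf.prob (bind_pmf (pmf_of_set F) g) A)
      = (\<Sum>i\<in>F. ennreal (measure_pmf.prob (g i) A)) / ennreal (card F)"
    using assms by (simp add: measure_pmf.emeasure_eq_measure[symmetric] nn_integral_pmf_of_set
        ennreal_of_nat_eq_real_of_nat)
  also have "\<dots> = ennreal ((\<Sum>i\<in>F. measure_pmf.prob (g i) A) / card F)"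
    using assms by (simp add: divide_ennreal sum_nonneg card_gt_0_iff)
  finally show ?thesis
    by (simp add: divide_nonneg_nonneg sum_nonneg)
qed

definition flips :: "bool list \<Rightarrow> nat set \<Rightarrow> bool list" where
  "flips y R = map (\<lambda>j. if j \<in> R then \<not> y ! j else y ! j) [0..<length y]"

lemma length_flips [simp]: "length (flips y R) = length y"
  by (simp add: flips_def)

lemma nth_flips: "j < length y \<Longrightarrow> flips y R ! j = (if j \<in> R then \<not> y ! j else y ! j)"
  by (simp add: flips_def)

lemma flips_empty [simp]: "flips y {} = y"
  by (simp add: flips_def map_nth)

lemma flips_flip: "i \<notin> R \<Longrightarrow> flips (flip y i) R = flips y (insert i R)"
proof (rule nth_equalityI)
  fix j assume "i \<notin> R" "j < length (flips (flip y i) R)"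
  then show "flips (flip y i) R ! j = flips y (insert i R) ! j"
    by (cases "j = i") (auto simp: flips_def flip_def)
qed (simp add: flip_def)

lemma set_pmf_hyp_loop:
  "(z, c) \<in> set_pmf (hyp_loop f x y F) \<Longrightarrow> length z = length y \<and> c \<le> card F"
proof (induction f x y F arbitrary: z c rule: hyp_loop.induct)
  case (1 f x y F)
  show ?case
  proof (cases "F = {} \<or> infinite F \<or> f y < f x")
    case True
    then show ?thesis using "1.prems" by (simp add: hyp_loop.simps)
  next
    case False
    then have F: "finite F" "F \<noteq> {}" by auto
    from "1.prems" False obtain i c' where i: "i \<in> F" and c: "c = Suc c'"
      and z: "(z, c') \<in> set_pmf (hyp_loop f x (flip y i) (F - {i}))"
      by (subst (asm) hyp_loop.simps) (auto simp: F)
    have "card (F - {i}) < card F"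
      using i F by (simp add: card_gt_0_iff)
    then show ?thesis
      using "1.IH"[OF False _ z] i F c by (simp add: flip_def)
  qed
qed

definition improving_flips ::
    "(bool list \<Rightarrow> real) \<Rightarrow> bool list \<Rightarrow> bool list \<Rightarrow> nat set \<Rightarrow> nat \<Rightarrow> nat set set" where
  "improving_flips f x y F r = {R. R \<subseteq> F \<and> card R = r \<and> f (flips y R) < f x}"

lemma card_improving_flips_le:
  assumes "finite F"
  shows "card (improving_flips f x y F r) \<le> card F choose r"
proof -
  have "card (improving_flips f x y F r) \<le> card {R. R \<subseteq> F \<and> card R = r}"
    using assms by (intro card_mono) (auto simp: improving_flips_def)
  then show ?thesis
    using n_subsets[OF assms] by simp
qed

lemma improving_flips_0:
  assumes "finite F"
  shows "improving_flips f x y F 0 = (if f y < f x then {{}} else {})"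
  using assms by (auto simp: improving_flips_def card_eq_0_iff dest: finite_subset)

lemma card_improving_flips_flip:
  assumes "finite F" "i \<in> F"
  shows "card (improving_flips f x (flip y i) (F - {i}) r)
           = card {R \<in> improving_flips f x y F (Suc r). i \<in> R}"
proof (rule bij_betw_same_card[of "insert i"], rule bij_betw_byWitness[of _ "\<lambda>R. R - {i}"])
  show "insert i ` improving_flips f x (flip y i) (F - {i}) r
          \<subseteq> {R \<in> improving_flips f x y F (Suc r). i \<in> R}"
  proof (rule image_subsetI)
    fix R assume R: "R \<in> improving_flips f x (flip y i) (F - {i}) r"
    then have "i \<notin> R" "finite R"
      using assms by (auto simp: improving_flips_def dest: finite_subset)
    then show "insert i R \<in> {R \<in> improving_flips f x y F (Suc r). i \<in> R}"
      using R assms by (auto simp: improving_flips_def flips_flip)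
  qed
  show "(\<lambda>R. R - {i}) ` {R \<in> improving_flips f x y F (Suc r). i \<in> R}
          \<subseteq> improving_flips f x (flip y i) (F - {i}) r"
    using assms by (auto simp: improving_flips_def flips_flip insert_absorb finite_subset)
qed (auto simp: improving_flips_def)

lemma sum_card_improving_flips_flip:
  assumes "finite F"
  shows "(\<Sum>i\<in>F. card (improving_flips f x (flip y i) (F - {i}) r))
           = Suc r * card (improving_flips f x y F (Suc r))"
proof -
  have "(\<Sum>i\<in>F. card (improving_flips f x (flip y i) (F - {i}) r))
      = (\<Sum>i\<in>F. card {R \<in> improving_flips f x y F (Suc r). i \<in> R})"
    using assms by (simp add: card_improving_flips_flip)
  also have "\<dots> = Suc r * card (improving_flips f x y F (Suc r))"
  proof (rule sum_multicount)
    show "finite (improving_flips f x y F (Suc r))"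
      using assms by (auto simp: improving_flips_def intro: finite_subset[of _ "Pow F"])
    have "{i \<in> F. i \<in> R} = R" if "R \<subseteq> F" for R
      using that by auto
    then show "\<forall>R\<in>improving_flips f x y F (Suc r). card {i \<in> F. i \<in> R} = Suc r"
      by (simp add: improving_flips_def)
  qed (use assms in simp)
  finally show ?thesis .
qed

lemma prob_hyp_loop_unfold:
  assumes "finite F" "F \<noteq> {}" "\<not> f y < f x"
  shows "measure_pmf.prob (hyp_loop f x y F) {zc. f (fst zc) < f x}
           = (\<Sum>i\<in>F. measure_pmf.prob (hyp_loop f x (flip y i) (F - {i})) {zc. f (fst zc) < f x})
               / card F"
proof -
  have "(\<lambda>(z, c). (z, Suc c)) -` {zc. f (fst zc) < f x} = {zc. f (fst zc) < f x}"
    by auto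
  then show ?thesis
    using assms by (subst hyp_loop.simps) (simp add: measure_bind_pmf_of_set)
qed

(* Induction on the loop: the first flipped position i is uniform on F, and R \<mapsto> R - {i} matches
   the improving (r + 1)-subsets containing i with the improving r-subsets of F - {i} seen
   from flip y i; every (r + 1)-subset is counted r + 1 times. *)
lemma hyp_loop_improvement_prob_ge:
  "finite F \<Longrightarrow> card (improving_flips f x y F r) / (card F choose r)
     \<le> measure_pmf.prob (hyp_loop f x y F) {zc. f (fst zc) < f x}"
proof (induction f x y F arbitrary: r rule: hyp_loop.induct)
  case (1 f x y F)
  let ?P = "\<lambda>y F. measure_pmf.prob (hyp_loop f x y F) {zc. f (fst zc) < f x}"
  consider (improved) "f y < f x" | (size_zero) "\<not> f y < f x" "r = 0"
    | (empty) r' where "F = {}" "r = Suc r'"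
    | (step) r' where "\<not> f y < f x" "F \<noteq> {}" "r = Suc r'"
    by (cases r) auto
  then show ?case
  proof cases
    case improved
    then have "?P y F = 1"
      by (simp add: hyp_loop.simps)
    then show ?thesis
      using card_improving_flips_le[OF "1.prems"] by (simp add: divide_le_eq_1 le_less_linear)
  next
    case size_zero
    then show ?thesis
      using "1.prems" by (simp add: improving_flips_0)
  next
    case empty
    then show ?thesis by simp
  next
    case (step r')
    define N where "N = card F"
    have N: "N = Suc (N - 1)"
      using "1.prems" step by (simp add: N_def card_gt_0_iff)
    have IH: "card (improving_flips f x (flip y i) (F - {i}) r') / ((N - 1) choose r')
                \<le> ?P (flip y i) (F - {i})" if "i \<in> F" for i
      using "1.IH"[of i r'] that step "1.prems" by (simp add: N_def)
    have "Suc r' * (N choose Suc r') = N * ((N - 1) choose r')"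
      using Suc_times_binomial[of r' "N - 1"] N by simp
    then have "card (improving_flips f x y F r) / (N choose r)
        = real (Suc r' * card (improving_flips f x y F (Suc r'))) / real (N * ((N - 1) choose r'))"
      using step by (metis mult_divide_mult_cancel_left_if of_nat_eq_0_iff of_nat_mult nat.distinct(1))
    also have "\<dots> = (\<Sum>i\<in>F. real (card (improving_flips f x (flip y i) (F - {i}) r')))
                        / (N * ((N - 1) choose r'))"
      by (simp only: sum_card_improving_flips_flip[OF "1.prems", symmetric] of_nat_sum of_nat_mult)
    also have "\<dots> = (\<Sum>i\<in>F. card (improving_flips f x (flip y i) (F - {i}) r')
                        / ((N - 1) choose r')) / N"
      by (simp add: sum_divide_distrib divide_divide_eq_left mult.commute)
    also have "\<dots> \<le> (\<Sum>i\<in>F. ?P (flip y i) (F - {i})) / N"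
      by (intro divide_right_mono sum_mono IH) simp_all
    also have "\<dots> = ?P y F"
      using prob_hyp_loop_unfold "1.prems" step by (simp add: N_def)
    finally show ?thesis
      by (simp add: N_def)
  qed
qed

lemma hyp_loop_improvement_prob_ge_half:
  assumes "finite F" "r \<le> card F" "card F choose r \<le> 2 * card (improving_flips f x y F r)"
  shows "1 / 2 \<le> measure_pmf.prob (hyp_loop f x y F) {zc. f (fst zc) < f x}"
proof -
  have "0 < card F choose r"
    using assms(2) by simp
  then have "1 / 2 \<le> card (improving_flips f x y F r) / (card F choose r)"
    using assms(3) by (simp add: field_simps)
  also have "\<dots> \<le> measure_pmf.prob (hyp_loop f x y F) {zc. f (fst zc) < f x}"
    by (rule hyp_loop_improvement_prob_ge[OF assms(1)])
  finally show ?thesis .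
qed

section \<open>Expected runtime through the rank of the fitness\<close>

lemma set_pmf_ia_step:
  assumes "(y, c) \<in> set_pmf (ia_step f n x)"
  shows "length y = length x \<and> c \<le> n \<and> f y \<le> f x"
proof -
  from assms obtain z where z: "(z, c) \<in> set_pmf (hyp_loop f x x {..<n})"
    and y: "y = (if f z \<le> f x then z else x)"
    by (auto simp: ia_step_def)
  show ?thesis
    using set_pmf_hyp_loop[OF z] y by auto
qed

lemma prob_ia_step_improves_ge:
  "measure_pmf.prob (hyp_loop f x x {..<n}) {zc. f (fst zc) < f x}
     \<le> measure_pmf.prob (ia_step f n x) {yc. f (fst yc) < f x}"
  unfolding ia_step_def measure_map_pmf
  by (rule measure_pmf.finite_measure_mono) auto

lemma nn_integral_cost_plus_potential_le:
  fixes M :: "('a \<times> nat) pmf" and V :: "'a \<Rightarrow> nat" and p :: real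
  assumes p: "0 < p" "p \<le> measure_pmf.prob M A"
    and step: "\<And>y c. (y, c) \<in> set_pmf M \<Longrightarrow> c \<le> n \<and> V y + of_bool ((y, c) \<in> A) \<le> v"
  shows "(\<integral>\<^sup>+ yc. ennreal (real (snd yc)) + ennreal (real n / p * V (fst yc)) \<partial>M)
           \<le> ennreal (real n / p * v)"
proof -
  define K where "K = n / p"
  have K: "0 \<le> K" "real n = K * p"
    using p by (simp_all add: K_def)
  let ?g = "\<lambda>yc. ennreal (real (snd yc)) + ennreal (K * V (fst yc))"
  \<comment> \<open>ennreal has no usable subtraction, so \<open>K * prob A\<close> is added rather than subtracted\<close>
  have pointwise: "?g yc + ennreal K * indicator A yc \<le> ennreal (real n + K * v)"
    if "yc \<in> set_pmf M" for yc
  proof -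
    obtain y c where yc: "yc = (y, c)"
      by (cases yc)
    have "c \<le> n" "V y + of_bool (yc \<in> A) \<le> v"
      using step that yc by auto
    then have "real c + K * real (V y + of_bool (yc \<in> A)) \<le> real n + K * real v"
      using K(1) by (intro add_mono mult_left_mono) (simp_all only: of_nat_le_iff)
    then show ?thesis
      using K(1) yc by (auto simp: ennreal_plus[symmetric] ennreal_mult[symmetric] algebra_simps
          simp del: ennreal_plus split: split_indicator)
  qed
  have "(\<integral>\<^sup>+ yc. ?g yc \<partial>M) + ennreal n \<le> (\<integral>\<^sup>+ yc. ?g yc \<partial>M) + ennreal K * emeasure M A"
  proof (rule add_left_mono)
    have "ennreal n = ennreal K * ennreal p"
      using K p by (simp add: ennreal_mult)
    also have "\<dots> \<le> ennreal K * emeasure M A"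
      using p by (intro mult_left_mono) (simp_all add: measure_pmf.emeasure_eq_measure)
    finally show "ennreal n \<le> ennreal K * emeasure M A" .
  qed
  also have "\<dots> = (\<integral>\<^sup>+ yc. ?g yc + ennreal K * indicator A yc \<partial>M)"
    by (simp add: nn_integral_add nn_integral_cmult_indicator)
  also have "\<dots> \<le> (\<integral>\<^sup>+ yc. ennreal (real n + K * v) \<partial>M)"
    by (rule nn_integral_mono_AE) (simp add: AE_measure_pmf_iff pointwise)
  also have "\<dots> = ennreal n + ennreal (K * v)"
    using K by (simp add: measure_pmf.emeasure_space_1 ennreal_plus)
  finally show ?thesis
    by (simp add: K_def add.commute ennreal_add_left_cancel_le)
qed

lemma card_less_of_bool_le:
  fixes V :: "'a :: linorder set"
  assumes "finite V" "v \<in> V" "v \<le> w"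
  shows "card {u \<in> V. u < v} + of_bool (v < w) \<le> card {u \<in> V. u < w}"
proof (cases "v < w")
  case True
  then have "insert v {u \<in> V. u < v} \<subseteq> {u \<in> V. u < w}"
    using assms by auto
  from card_mono[OF _ this] show ?thesis
    using True assms by simp
next
  case False
  then show ?thesis
    using assms by (auto intro: card_mono)
qed

lemma ia_cost_le_rank:
  fixes p :: real
  assumes improve: "\<And>x. length x = n \<Longrightarrow> \<not> is_optimal f n x \<Longrightarrow>
      p \<le> measure_pmf.prob (hyp_loop f x x {..<n}) {zc. f (fst zc) < f x}"
    and p: "0 < p" and x: "length x = n"
  shows "ia_cost f n t x \<le> ennreal (real n / p * card {v \<in> f ` {xs. length xs = n}. v < f x})"
  using x
proof (induction t arbitrary: x)
  case 0
  then show ?case by simp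
next
  case (Suc t)
  define rank where "rank y = card {v \<in> f ` {xs. length xs = n}. v < f y}" for y
  have fin: "finite (f ` {xs. length xs = n})"
    by (simp add: finite_list_length)
  show ?case
  proof (cases "is_optimal f n x")
    case True
    then show ?thesis by simp
  next
    case False
    let ?M = "ia_step f n x"
    have step: "c \<le> n \<and> rank y + of_bool ((y, c) \<in> {yc. f (fst yc) < f x}) \<le> rank x"
      if "(y, c) \<in> set_pmf ?M" for y c
    proof -
      have "length y = n" "c \<le> n" "f y \<le> f x"
        using set_pmf_ia_step[OF that] Suc.prems by auto
      then show ?thesis
        using card_less_of_bool_le[OF fin, of "f y" "f x"] by (simp add: rank_def)
    qed
    have "p \<le> measure_pmf.prob ?M {yc. f (fst yc) < f x}"
      using improve[OF Suc.prems False] prob_ia_step_improves_ge[of f x n] by linarith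
    note drift = nn_integral_cost_plus_potential_le[OF p this step]
    have "ia_cost f n (Suc t) x = (\<integral>\<^sup>+ yc. ennreal (real (snd yc)) + ia_cost f n t (fst yc) \<partial>?M)"
      using False by simp
    also have "\<dots> \<le> (\<integral>\<^sup>+ yc. ennreal (real (snd yc)) + ennreal (real n / p * rank (fst yc)) \<partial>?M)"
      using Suc.IH set_pmf_ia_step Suc.prems
      by (intro nn_integral_mono_AE) (auto simp: AE_measure_pmf_iff rank_def intro!: add_left_mono)
    also have "\<dots> \<le> ennreal (real n / p * rank x)"
      by (rule drift)
    finally show ?thesis
      by (simp add: rank_def)
  qed
qed

lemma ia_runtime_le_fitness_levels:
  fixes p :: real
  assumes improve: "\<And>x. length x = n \<Longrightarrow> \<not> is_optimal f n x \<Longrightarrow>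
      p \<le> measure_pmf.prob (hyp_loop f x x {..<n}) {zc. f (fst zc) < f x}"
    and p: "0 < p"
  shows "ia_runtime f n \<le> ennreal (1 + real n / p * card (f ` {xs. length xs = n}))"
proof -
  let ?V = "f ` {xs :: bool list. length xs = n}"
  let ?B = "1 + real n / p * card ?V"
  have cost: "1 + (SUP t. ia_cost f n t x) \<le> ennreal ?B" if "length x = n" for x
  proof -
    have "ia_cost f n t x \<le> ennreal (real n / p * card ?V)" for t
    proof -
      have "ia_cost f n t x \<le> ennreal (real n / p * card {v \<in> ?V. v < f x})"
        by (rule ia_cost_le_rank[OF _ p that]) (fact improve)
      also have "card {v \<in> ?V. v < f x} \<le> card ?V"
        by (rule card_mono) (simp_all add: finite_list_length)
      then have "ennreal (real n / p * card {v \<in> ?V. v < f x}) \<le> ennreal (real n / p * card ?V)"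
        using p by (intro ennreal_leI mult_left_mono) simp_all
      finally show ?thesis .
    qed
    then have "1 + (SUP t. ia_cost f n t x) \<le> 1 + ennreal (real n / p * card ?V)"
      by (simp add: SUP_least add_left_mono)
    then show ?thesis
      using p by (simp add: ennreal_plus)
  qed
  have support: "set_pmf (pmf_of_set {xs :: bool list. length xs = n}) = {xs. length xs = n}"
    by (rule set_pmf_of_set) (auto simp: finite_list_length intro: length_replicate)
  have "ia_runtime f n \<le> (\<integral>\<^sup>+ x. ennreal ?B \<partial>measure_pmf (pmf_of_set {xs :: bool list. length xs = n}))"
    unfolding ia_runtime_def
    by (rule nn_integral_mono_AE) (use cost in \<open>simp add: AE_measure_pmf_iff support\<close>)
  then show ?thesis
    by (simp add: measure_pmf.emeasure_space_1)
qed

section \<open>Two large jobs and 2h small jobs\<close>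

definition ones_in :: "bool list \<Rightarrow> nat set \<Rightarrow> nat" where
  "ones_in xs A = card {i \<in> A. xs ! i}"

lemma ones_in_le_card: "finite A \<Longrightarrow> ones_in xs A \<le> card A"
  unfolding ones_in_def by (rule card_mono) auto

lemma ones_in_Diff: "finite A \<Longrightarrow> B \<subseteq> A \<Longrightarrow> ones_in x A = ones_in x (A - B) + ones_in x B"
  unfolding ones_in_def
  by (subst card_Un_disjoint[symmetric]) (auto intro!: arg_cong[where f = card] dest: finite_subset)

lemma card_zeros_in: "finite A \<Longrightarrow> card {i \<in> A. \<not> x ! i} = card A - ones_in x A"
  unfolding ones_in_def by (subst card_Diff_subset[symmetric]) (auto intro!: arg_cong[where f = card])

lemma ones_in_pair: "ones_in x {0, 1} = of_bool (x ! 0) + of_bool (x ! 1)"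
proof -
  have "ones_in x {0, 1} = (\<Sum>i\<in>{0, 1}. of_bool (x ! i))"
    by (simp add: ones_in_def sum_of_bool_eq Int_def conj_commute)
  then show ?thesis
    by simp
qed

lemma sum_if_nth_eq_ones_in:
  fixes c :: real
  assumes "finite A" "\<And>i. i \<in> A \<Longrightarrow> p i = c"
  shows "(\<Sum>i\<in>A. if xs ! i then p i else 0) = c * ones_in xs A"
proof -
  have "(\<Sum>i\<in>A. if xs ! i then p i else 0) = (\<Sum>i\<in>{i \<in> A. xs ! i}. p i)"
    using assms(1) by (simp add: sum.inter_filter)
  also have "\<dots> = c * ones_in xs A"
    using assms(2) by (simp add: ones_in_def)
  finally show ?thesis .
qed

lemma ones_in_flips:
  assumes "finite A" "A \<subseteq> {..<length x}"
  shows "real (ones_in (flips x R) A)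
           = real (ones_in x A) + real (card {i \<in> A \<inter> R. \<not> x ! i}) - real (ones_in x (A \<inter> R))"
proof -
  have "{i \<in> A. flips x R ! i} = {i \<in> A - R. x ! i} \<union> {i \<in> A \<inter> R. \<not> x ! i}"
    using assms(2) by (auto simp: nth_flips)
  moreover have "{i \<in> A. x ! i} = {i \<in> A - R. x ! i} \<union> {i \<in> A \<inter> R. x ! i}"
    by auto
  ultimately show ?thesis
    using assms(1) by (simp add: ones_in_def card_Un_disjoint disjoint_iff)
qed

lemma ones_in_flips_single:
  assumes "finite A" "A \<subseteq> {..<length x}"
  shows "real (ones_in (flips x {i}) A)
           = real (ones_in x A) + (if i \<in> A then (if x ! i then -1 else 1) else 0)"
proof -
  have "{j \<in> A \<inter> {i}. P j} = (if i \<in> A \<and> P i then {i} else {})" for P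
    by auto
  then show ?thesis
    using ones_in_flips[OF assms, of "{i}"] by (simp add: ones_in_def)
qed

lemma makespan_eq_half_plus_abs:
  "makespan p xs = (\<Sum>i<length xs. p i) / 2
     + \<bar>(\<Sum>i<length xs. if xs ! i then p i else 0) - (\<Sum>i<length xs. p i) / 2\<bar>"
proof -
  have "(\<Sum>i<length xs. if xs ! i then 0 else p i)
      = (\<Sum>i<length xs. p i) - (\<Sum>i<length xs. if xs ! i then p i else 0)"
    by (simp add: sum_subtractf[symmetric]) (rule sum.cong, auto)
  then show ?thesis
    by (simp add: makespan_def)
qed

(* Load of M2 minus half the total load 2 b + 2 h s, where jobs 0 and 1 have size b and
   jobs 2, ..., 2 h + 1 have size s. *)
definition imbalance :: "real \<Rightarrow> real \<Rightarrow> nat \<Rightarrow> bool list \<Rightarrow> real" where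
  "imbalance b s h x = (real (ones_in x {0, 1}) - 1) * b + (real (ones_in x {2..<2 * h + 2}) - h) * s"

lemma makespan_two_sizes:
  fixes b s :: real
  assumes p: "p = (\<lambda>i. if i < 2 then b else s)" and x: "length x = 2 * h + 2"
  shows "makespan p x = b + h * s + \<bar>imbalance b s h x\<bar>"
proof -
  let ?S = "{2..<2 * h + 2}"
  have split: "{..<2 * h + 2} = {0, 1} \<union> ?S"
    by auto
  have "(\<Sum>i<2 * h + 2. p i) = (\<Sum>i\<in>{0, 1}. p i) + (\<Sum>i\<in>?S. p i)"
    unfolding split by (rule sum.union_disjoint) auto
  also have "(\<Sum>i\<in>?S. p i) = (\<Sum>i\<in>?S. s)"
    by (rule sum.cong) (auto simp: p)
  finally have total: "(\<Sum>i<2 * h + 2. p i) = 2 * b + 2 * h * s"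
    by (simp add: p)
  have big: "(\<Sum>i\<in>{0, 1}. if x ! i then p i else 0) = b * ones_in x {0, 1}"
    by (rule sum_if_nth_eq_ones_in) (auto simp: p)
  have small: "(\<Sum>i\<in>?S. if x ! i then p i else 0) = s * ones_in x ?S"
    by (rule sum_if_nth_eq_ones_in) (auto simp: p)
  have "(\<Sum>i<2 * h + 2. if x ! i then p i else 0)
      = (\<Sum>i\<in>{0, 1}. if x ! i then p i else 0) + (\<Sum>i\<in>?S. if x ! i then p i else 0)"
    unfolding split by (rule sum.union_disjoint) auto
  then have "(\<Sum>i<2 * h + 2. if x ! i then p i else 0) = b * ones_in x {0, 1} + s * ones_in x ?S"
    by (simp only: big small)
  moreover have "imbalance b s h x = b * ones_in x {0, 1} + s * ones_in x ?S - (2 * b + 2 * h * s) / 2"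
    by (simp add: imbalance_def algebra_simps)
  ultimately have "makespan p x = (2 * b + 2 * h * s) / 2 + \<bar>imbalance b s h x\<bar>"
    using makespan_eq_half_plus_abs[of p x] x total by simp
  also have "\<dots> = b + h * s + \<bar>imbalance b s h x\<bar>"
    by simp
  finally show ?thesis .
qed

lemma makespan_two_sizes_less_iff:
  fixes b s :: real
  assumes "p = (\<lambda>i. if i < 2 then b else s)" "length x = 2 * h + 2" "length y = 2 * h + 2"
  shows "makespan p y < makespan p x \<longleftrightarrow> \<bar>imbalance b s h y\<bar> < \<bar>imbalance b s h x\<bar>"
  using makespan_two_sizes[OF assms(1)] assms(2,3) by simp

lemma imbalance_nonzero_if_not_optimal:
  fixes b s :: real
  assumes "p = (\<lambda>i. if i < 2 then b else s)" "length x = 2 * h + 2"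
    and "\<not> is_optimal (makespan p) (2 * h + 2) x"
  shows "imbalance b s h x \<noteq> 0"
  using assms makespan_two_sizes[OF assms(1)] by (force simp: is_optimal_def)

lemma card_makespan_two_sizes_values:
  fixes b s :: real
  assumes p: "p = (\<lambda>i. if i < 2 then b else s)"
  shows "card (makespan p ` {xs. length xs = 2 * h + 2}) \<le> 3 * (2 * h + 1)"
proof -
  define g where "g = (\<lambda>(u, T). b + h * s + \<bar>(real u - 1) * b + (real T - h) * s\<bar>)"
  have "makespan p ` {xs. length xs = 2 * h + 2} \<subseteq> g ` ({..2} \<times> {..2 * h})"
  proof (rule image_subsetI)
    fix x :: "bool list" assume "x \<in> {xs. length xs = 2 * h + 2}"
    then have "makespan p x = g (ones_in x {0, 1}, ones_in x {2..<2 * h + 2})"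
      using makespan_two_sizes[OF p] by (simp add: g_def imbalance_def)
    moreover have "ones_in x {0, 1} \<le> 2" "ones_in x {2..<2 * h + 2} \<le> 2 * h"
      using ones_in_le_card[of "{0, 1}" x] ones_in_le_card[of "{2..<2 * h + 2}" x] by simp_all
    ultimately show "makespan p x \<in> g ` ({..2} \<times> {..2 * h})"
      by auto
  qed
  then have "card (makespan p ` {xs. length xs = 2 * h + 2}) \<le> card (g ` ({..2} \<times> {..2 * h}))"
    by (rule card_mono[rotated]) simp
  also have "\<dots> \<le> card ({..2::nat} \<times> {..2 * h})"
    by (rule card_image_le) simp
  finally show ?thesis
    by (simp add: card_cartesian_product)
qed

lemma improving_flip_small_job:
  fixes b s :: real
  assumes p: "p = (\<lambda>i. if i < 2 then b else s)" and s: "0 < s" and x: "length x = 2 * h + 2"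
    and apart: "x ! 0 \<noteq> x ! 1" and T: "ones_in x {2..<2 * h + 2} \<noteq> h"
    and i: "i \<in> {2..<2 * h + 2}" "x ! i = (h < ones_in x {2..<2 * h + 2})"
  shows "{i} \<in> improving_flips (makespan p) x x {..<2 * h + 2} 1"
proof -
  let ?S = "{2..<2 * h + 2}"
  define T where "T = ones_in x ?S"
  define d :: real where "d = (if h < T then -1 else 1)"
  have big: "ones_in x {0, 1} = 1"
    unfolding ones_in_pair using apart by auto
  have sub: "{0, 1} \<subseteq> {..<length x}" "?S \<subseteq> {..<length x}"
    using x by auto
  have "real (ones_in (flips x {i}) {0, 1}) = ones_in x {0, 1}"
    using ones_in_flips_single[OF _ sub(1), of i] i by simp
  moreover have "real (ones_in (flips x {i}) ?S) = T + d"
    using ones_in_flips_single[OF _ sub(2), of i] i by (auto simp: T_def d_def)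
  ultimately have "imbalance b s h (flips x {i}) = (real T + d - h) * s"
    using big by (simp add: imbalance_def)
  moreover have "imbalance b s h x = (real T - h) * s"
    using big by (simp add: imbalance_def T_def)
  moreover have "\<bar>real T + d - h\<bar> < \<bar>real T - h\<bar>"
    using T by (auto simp: T_def d_def)
  ultimately have "\<bar>imbalance b s h (flips x {i})\<bar> < \<bar>imbalance b s h x\<bar>"
    using s by (simp add: abs_mult)
  then show ?thesis
    using makespan_two_sizes_less_iff[OF p x] i x by (auto simp: improving_flips_def)
qed

lemma card_improving_flips_large_apart:
  fixes b s :: real
  assumes p: "p = (\<lambda>i. if i < 2 then b else s)" and s: "0 < s" and x: "length x = 2 * h + 2"
    and apart: "x ! 0 \<noteq> x ! 1" and imb: "imbalance b s h x \<noteq> 0"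
  shows "2 * h + 2 \<le> 2 * card (improving_flips (makespan p) x x {..<2 * h + 2} 1)"
proof -
  let ?S = "{2..<2 * h + 2}"
  define T where "T = ones_in x ?S"
  have T: "T \<noteq> h"
    using imb apart unfolding imbalance_def ones_in_pair by (auto simp: T_def)
  \<comment> \<open>the small jobs on the fuller machine\<close>
  define G where "G = {i \<in> ?S. x ! i = (h < T)}"
  have "h + 1 \<le> card G"
  proof (cases "h < T")
    case True
    then show ?thesis
      by (simp add: G_def T_def ones_in_def)
  next
    case False
    then have "card G = 2 * h - T"
      using card_zeros_in[of ?S x] by (simp add: G_def T_def)
    then show ?thesis
      using False T by simp
  qed
  moreover have "(\<lambda>i. {i}) ` G \<subseteq> improving_flips (makespan p) x x {..<2 * h + 2} 1"
    using improving_flip_small_job[OF p s x apart] T by (auto simp: G_def T_def)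
  then have "card ((\<lambda>i. {i}) ` G) \<le> card (improving_flips (makespan p) x x {..<2 * h + 2} 1)"
    by (rule card_mono[rotated])
      (auto simp: improving_flips_def intro: finite_subset[of _ "Pow {..<2 * h + 2}"])
  moreover have "card ((\<lambda>i. {i}) ` G) = card G"
    by (rule card_image) (simp add: inj_on_def)
  ultimately show ?thesis
    by linarith
qed

(* u large jobs on M2; of the small jobs on M2, a are among the h flipped ones and c are not. *)
lemma abs_imbalance_swap_less:
  fixes b s u :: real and a c h :: nat
  assumes s: "0 < s" and hs: "h * s < b" and "a \<le> h" "c \<le> h" and u: "u = 0 \<or> u = 2"
  shows "\<bar>(real c - a) * s\<bar> < \<bar>(u - 1) * b + (real c + a - h) * s\<bar>"
proof -
  have "real a * s \<le> h * s" "real c * s \<le> h * s"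
    using assms by (simp_all add: mult_right_mono)
  moreover have "0 \<le> real a * s" "0 \<le> real c * s"
    using s by simp_all
  ultimately show ?thesis
    using u hs by (elim disjE) (auto simp: algebra_simps abs_if)
qed

lemma improving_flip_large_and_half:
  fixes b s :: real
  assumes p: "p = (\<lambda>i. if i < 2 then b else s)" and s: "0 < s" and hs: "h * s < b"
    and x: "length x = 2 * h + 2" and together: "x ! 0 = x ! 1"
    and j: "j \<in> {0, 1}" and R: "R \<subseteq> {2..<2 * h + 2}" "card R = h"
  shows "insert j R \<in> improving_flips (makespan p) x x {..<2 * h + 2} (h + 1)"
proof -
  let ?S = "{2..<2 * h + 2}"
  have "finite R"
    using R(1) by (rule finite_subset) simp
  have sub: "?S \<subseteq> {..<length x}"
    using x by auto
  define a where "a = ones_in x R"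
  define c where "c = ones_in x (?S - R)"
  have "a \<le> h" "c \<le> h"
    using ones_in_le_card[of R x] ones_in_le_card[of "?S - R" x] R \<open>finite R\<close>
    by (simp_all add: a_def c_def card_Diff_subset)
  have T: "ones_in x ?S = c + a"
    using ones_in_Diff[of ?S R x] R by (simp add: a_def c_def)
  have "ones_in (flips x (insert j R)) {0, 1} = 1"
    unfolding ones_in_pair using j R together x by (auto simp: nth_flips)
  moreover have "real (ones_in (flips x (insert j R)) ?S) - h = real c - a"
  proof -
    have "?S \<inter> insert j R = R"
      using j R by auto
    then show ?thesis
      using ones_in_flips[OF _ sub, of "insert j R"] card_zeros_in[OF \<open>finite R\<close>, of x] T R
        \<open>a \<le> h\<close>
      by (simp add: a_def Collect_conj_eq[symmetric] Int_def)
  qed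
  ultimately have "imbalance b s h (flips x (insert j R)) = (real c - a) * s"
    by (simp add: imbalance_def)
  moreover have "imbalance b s h x = (real (ones_in x {0, 1}) - 1) * b + (real c + a - h) * s"
    using T by (simp add: imbalance_def)
  moreover have "real (ones_in x {0, 1}) = 0 \<or> real (ones_in x {0, 1}) = 2"
    unfolding ones_in_pair using together by simp
  ultimately have "\<bar>imbalance b s h (flips x (insert j R))\<bar> < \<bar>imbalance b s h x\<bar>"
    using abs_imbalance_swap_less[OF s hs \<open>a \<le> h\<close> \<open>c \<le> h\<close>] by simp
  moreover have "j \<notin> R"
    using j R by auto
  ultimately show ?thesis
    using makespan_two_sizes_less_iff[OF p x] j R x \<open>finite R\<close>
    by (auto simp: improving_flips_def)
qed

lemma card_improving_flips_large_together:
  fixes b s :: real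
  assumes p: "p = (\<lambda>i. if i < 2 then b else s)" and s: "0 < s" and hs: "h * s < b"
    and x: "length x = 2 * h + 2" and together: "x ! 0 = x ! 1"
  shows "2 * (2 * h choose h) \<le> card (improving_flips (makespan p) x x {..<2 * h + 2} (h + 1))"
proof -
  define X where "X = {R. R \<subseteq> {2..<2 * h + 2} \<and> card R = h}"
  have inj: "inj_on (\<lambda>(j, R). insert j R) ({0, 1} \<times> X)"
  proof (rule inj_onI, clarify)
    fix j R j' R'
    assume j: "j \<in> {0, 1}" "j' \<in> {0, 1}" and R: "R \<in> X" "R' \<in> X"
      and eq: "insert j R = insert j' R'"
    have "j \<notin> R" "j \<notin> R'" "j' \<notin> R'"
      using j R by (auto simp: X_def)
    then have "j = j'"
      using eq by blast
    then show "j = j' \<and> R = R'"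
      using eq insert_ident[OF \<open>j \<notin> R\<close> \<open>j \<notin> R'\<close>] by simp
  qed
  have "card X = 2 * h choose h"
    using n_subsets[of "{2..<2 * h + 2}" h] by (simp add: X_def)
  then have "card ((\<lambda>(j, R). insert j R) ` ({0, 1} \<times> X)) = 2 * (2 * h choose h)"
    by (subst card_image[OF inj]) (simp add: card_cartesian_product)
  moreover have "(\<lambda>(j, R). insert j R) ` ({0, 1} \<times> X)
      \<subseteq> improving_flips (makespan p) x x {..<2 * h + 2} (h + 1)"
    using improving_flip_large_and_half[OF p s hs x together] by (auto simp: X_def)
  then have "card ((\<lambda>(j, R). insert j R) ` ({0, 1} \<times> X))
      \<le> card (improving_flips (makespan p) x x {..<2 * h + 2} (h + 1))"
    by (rule card_mono[rotated])
      (auto simp: improving_flips_def intro: finite_subset[of _ "Pow {..<2 * h + 2}"])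
  ultimately show ?thesis
    by simp
qed

lemma binomial_Suc_central_le: "(2 * h + 2) choose (h + 1) \<le> 4 * (2 * h choose h)"
proof -
  have "(2 * h + 2) choose (h + 1) = (2 * h + 1 choose h) + (2 * h + 1 choose (h + 1))"
    by simp
  also have "2 * h + 1 choose h = 2 * h + 1 choose (h + 1)"
    using central_binomial_odd[of "2 * h + 1"] by simp
  also have "2 * h + 1 choose (h + 1) = (2 * h choose h) + (2 * h choose (h + 1))"
    by simp
  finally show ?thesis
    using binomial_maximum'[of h "h + 1"] by simp
qed

lemma two_sizes_improvement_prob_ge_half:
  fixes b s :: real
  assumes p: "p = (\<lambda>i. if i < 2 then b else s)" and s: "0 < s" and hs: "h * s < b"
    and x: "length x = 2 * h + 2" and not_opt: "\<not> is_optimal (makespan p) (2 * h + 2) x"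
  shows "1 / 2 \<le> measure_pmf.prob (hyp_loop (makespan p) x x {..<2 * h + 2})
                    {zc. makespan p (fst zc) < makespan p x}"
proof -
  let ?I = "improving_flips (makespan p) x x {..<2 * h + 2}"
  obtain r where "r \<le> 2 * h + 2" "(2 * h + 2) choose r \<le> 2 * card (?I r)"
  proof (cases "x ! 0 = x ! 1")
    case True
    then show ?thesis
      using that[of "h + 1"] card_improving_flips_large_together[OF p s hs x True]
        binomial_Suc_central_le[of h] by simp
  next
    case False
    then show ?thesis
      using that[of 1] card_improving_flips_large_apart[OF p s x False]
        imbalance_nonzero_if_not_optimal[OF p x not_opt] by simp
  qed
  then show ?thesis
    by (intro hyp_loop_improvement_prob_ge_half) simp_all
qed

lemma ia_runtime_two_sizes_le:
  fixes b s :: real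
  assumes p: "p = (\<lambda>i. if i < 2 then b else s)" and s: "0 < s" and hs: "h * s < b"
  shows "ia_runtime (makespan p) (2 * h + 2) \<le> ennreal (1 + 6 * real (2 * h + 1) * real (2 * h + 2))"
proof -
  let ?V = "makespan p ` {xs. length xs = 2 * h + 2}"
  have "ia_runtime (makespan p) (2 * h + 2) \<le> ennreal (1 + real (2 * h + 2) / (1 / 2) * card ?V)"
    by (rule ia_runtime_le_fitness_levels[OF two_sizes_improvement_prob_ge_half[OF p s hs]]) simp_all
  also have "\<dots> \<le> ennreal (1 + 6 * real (2 * h + 1) * real (2 * h + 2))"
  proof (rule ennreal_leI)
    have "real (card ?V) \<le> real (3 * (2 * h + 1))"
      using card_makespan_two_sizes_values[OF p, of h] by (simp only: of_nat_le_iff)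
    then have "real (2 * h + 2) / (1 / 2) * card ?V \<le> real (2 * h + 2) / (1 / 2) * real (3 * (2 * h + 1))"
      by (rule mult_left_mono) simp
    then show "1 + real (2 * h + 2) / (1 / 2) * card ?V \<le> 1 + 6 * real (2 * h + 1) * real (2 * h + 2)"
      by (simp add: algebra_simps)
  qed
  finally show ?thesis .
qed

theorem corollary1:
  fixes eps :: real
  assumes "0 < eps" and "eps < 1/3"
  shows "\<exists>C N. \<forall>n\<ge>N. even n \<longrightarrow>
           ia_runtime (makespan (P_star eps n)) n \<le> ennreal (C * real n ^ 2)"
proof (intro exI allI impI)
  fix n :: nat assume "4 \<le> n" and "even n"
  then obtain h where n: "n = 2 * h + 2" and h: "1 \<le> h"
  proof -
    obtain k where "n = 2 * k"
      using \<open>even n\<close> by blast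
    then show ?thesis
      using that[of "k - 1"] \<open>4 \<le> n\<close> by simp
  qed
  define b s where "b = 1/3 - eps/4" and "s = (1/3 + eps/2) / (2 * h)"
  have p: "P_star eps n = (\<lambda>i. if i < 2 then b else s)"
    using n by (auto simp: P_star_def b_def s_def)
  \<comment> \<open>\<open>h * s = 1/6 + eps/4\<close>, so \<open>hs\<close> is exactly \<open>eps < 1/3\<close>\<close>
  have s: "0 < s" and hs: "h * s < b"
    using assms h by (simp_all add: b_def s_def field_simps)
  have "ia_runtime (makespan (P_star eps n)) n \<le> ennreal (1 + 6 * real (2 * h + 1) * real n)"
    using ia_runtime_two_sizes_le[OF p s hs] by (simp only: n)
  also have "\<dots> \<le> ennreal (6 * real n ^ 2)"
    using n by (intro ennreal_leI) (simp add: power2_eq_square algebra_simps)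
  finally show "ia_runtime (makespan (P_star eps n)) n \<le> ennreal (6 * real n ^ 2)" .
qed

end
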